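(* Let $A\in\mathbb{R}^{n\times n}$, $B\in\mathbb{R}^{n\times r}$, and shifts $\alpha_1,\ldots,\alpha_j\in\mathbb{C}$ with $\mathrm{Re}(\alpha_i)<0$ and $A+\alpha_iI$ nonsingular. Let $w_i$ ($0\le i\le j$) be the residual factors of the inexact LR-ADI iteration with $M=I$ described in the context, with linear-system residuals $s_i$, and let $w^{\mathrm{exact}}_j:=\Big[\prod_{k=1}^{j}\mathcal{C}_k\Big]B$ be the residual factor of the exact LR-ADI iteration (all $s_i=0$). Then $$w_j=w^{\mathrm{exact}}_j-\sum_{i=1}^{j}\Big[\prod_{k=i+1}^{j}\mathcal{C}_k\Big](\mathcal{C}_i-I)s_i.$$
   Context: $\mathcal{C}_k:=(A+\alpha_kI)^{-1}(A-\overline{\alpha_k}I)$ (these matrices commute with each other); products $\prod_{k=i+1}^{j}\mathcal{C}_k=\mathcal{C}_j\cdots\mathcal{C}_{i+1}$, empty product $=I$. Inexact LR-ADI with $M=I$: $w_0:=B$, $\gamma_i:=\sqrt{-2\,\mathrm{Re}(\alpha_i)}$; $v_i$ arbitrary with $s_i:=w_{i-1}-(A+\alpha_iI)v_i$, and $w_i:=w_{i-1}+\gamma_i^2v_i$. *)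

theory Defs
  imports "HOL-Analysis.Analysis"
begin

definition cmat :: "real^'c^'r \<Rightarrow> complex^'c^'r" where
  "cmat X = (\<chi> i j. complex_of_real (X $ i $ j))"

definition cayley :: "real^'n^'n \<Rightarrow> complex \<Rightarrow> complex^'n^'n" where
  "cayley A a = matrix_inv (cmat A + mat a) ** (cmat A - mat (cnj a))"

text \<open>Ordered product C_j ... C_{i+1} (= identity if j <= i).\<close>
primrec cayley_prod :: "real^'n^'n \<Rightarrow> (nat \<Rightarrow> complex) \<Rightarrow> nat \<Rightarrow> nat \<Rightarrow> complex^'n^'n" where
  "cayley_prod A \<alpha> i 0 = mat 1"
| "cayley_prod A \<alpha> i (Suc j) =
     (if i \<le> j then cayley A (\<alpha> (Suc j)) ** cayley_prod A \<alpha> i j else mat 1)"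

end

theory Submission
  imports Defs
begin

text \<open>Since \<open>\<C>\<^sub>i - I = -2 Re(\<alpha>\<^sub>i) (A + \<alpha>\<^sub>i I)\<^sup>-\<^sup>1 = \<gamma>\<^sub>i\<^sup>2 (A + \<alpha>\<^sub>i I)\<^sup>-\<^sup>1\<close> and
  \<open>v\<^sub>i = (A + \<alpha>\<^sub>i I)\<^sup>-\<^sup>1 (w\<^sub>i\<^sub>-\<^sub>1 - s\<^sub>i)\<close>, one inexact step reads
  \<open>w\<^sub>i = w\<^sub>i\<^sub>-\<^sub>1 + (\<C>\<^sub>i - I)(w\<^sub>i\<^sub>-\<^sub>1 - s\<^sub>i) = \<C>\<^sub>i w\<^sub>i\<^sub>-\<^sub>1 - (\<C>\<^sub>i - I) s\<^sub>i\<close>.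
  Unrolling this affine recurrence from \<open>w\<^sub>0 = B\<close> (variation of constants) gives the formula.\<close>

lemma matrix_inv_left:
  fixes M :: "'a::semiring_1^'n^'m"
  assumes "invertible M"
  shows "matrix_inv M ** M = mat 1"
  using someI_ex[OF assms[unfolded invertible_def]] unfolding matrix_inv_def by blast

lemma matrix_diff_ldistrib: "(A::'a::ring_1^'n^'m) ** (B - C) = A ** B - A ** C"
  by (simp add: matrix_matrix_mult_def vec_eq_iff algebra_simps sum_subtractf)

lemma matrix_diff_rdistrib: "((A::'a::ring_1^'n^'m) - B) ** C = A ** C - B ** C"
  by (simp add: matrix_matrix_mult_def vec_eq_iff algebra_simps sum_subtractf)

lemma matrix_sum_ldistrib: "(A::'a::ring_1^'n^'m) ** sum f S = (\<Sum>i\<in>S. A ** f i)"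
  by (induction S rule: infinite_finite_induct) (auto simp: matrix_add_ldistrib)

lemma mat_of_real: "mat (of_real c) = (c *\<^sub>R mat 1 :: 'a::real_algebra_1^'n^'n)"
  by (simp add: mat_def vec_eq_iff of_real_def)

lemma cayley_minus_mat1:
  assumes "invertible (cmat A + mat a)"
  shows "cayley A a - mat 1 = (- 2 * Re a) *\<^sub>R matrix_inv (cmat A + mat a)"
proof -
  let ?M = "cmat A + mat a"
  have "cmat A - mat (cnj a) = ?M - mat (of_real (2 * Re a))"
    by (simp add: mat_def vec_eq_iff complex_eq_iff)
  then have "cayley A a = matrix_inv ?M ** (?M - (2 * Re a) *\<^sub>R mat 1)"
    by (simp only: cayley_def mat_of_real)
  also have "\<dots> = mat 1 - (2 * Re a) *\<^sub>R matrix_inv ?M"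
    by (simp add: matrix_diff_ldistrib matrix_inv_left[OF assms] matrix_scalar_ac)
  finally show ?thesis
    by simp
qed

lemma inexact_adi_step:
  assumes inv: "invertible (cmat A + mat a)"
    and s: "s = w' - (cmat A + mat a) ** v"
    and w: "w = w' + (- 2 * Re a) *\<^sub>R v"
  shows "w = cayley A a ** w' - (cayley A a - mat 1) ** s"
proof -
  let ?M = "cmat A + mat a"
  have "v = matrix_inv ?M ** (w' - s)"
    using s by (simp add: matrix_mul_assoc matrix_inv_left[OF inv])
  then have "w = w' + (cayley A a - mat 1) ** (w' - s)"
    using w by (simp add: cayley_minus_mat1[OF inv] scalar_matrix_assoc)
  then show ?thesis
    by (simp add: matrix_diff_ldistrib matrix_diff_rdistrib)
qed

lemma cayley_recurrence_unfold:
  assumes rec: "\<And>i. 1 \<le> i \<Longrightarrow> i \<le> j \<Longrightarrow> w i = cayley A (\<alpha> i) ** w (i - 1) - r i"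
  shows "w j = cayley_prod A \<alpha> 0 j ** w 0 - (\<Sum>i = 1..j. cayley_prod A \<alpha> i j ** r i)"
  using rec
proof (induction j)
  case 0
  then show ?case
    by simp
next
  case (Suc m)
  let ?C = "cayley A (\<alpha> (Suc m))"
  have IH: "w m = cayley_prod A \<alpha> 0 m ** w 0 - (\<Sum>i = 1..m. cayley_prod A \<alpha> i m ** r i)"
    using Suc by simp
  have "?C ** (\<Sum>i = 1..m. cayley_prod A \<alpha> i m ** r i) = (\<Sum>i = 1..m. cayley_prod A \<alpha> i (Suc m) ** r i)"
    by (auto simp: matrix_sum_ldistrib matrix_mul_assoc intro: sum.cong)
  moreover have "w (Suc m) = ?C ** w m - r (Suc m)"
    using Suc.prems by simp
  ultimately show ?case
    by (simp add: IH matrix_diff_ldistrib matrix_mul_assoc)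
qed

theorem lemma3p4:
  fixes A :: "real^'n^'n" and B :: "real^'r^'n"
    and \<alpha> :: "nat \<Rightarrow> complex" and j :: nat
    and v w s :: "nat \<Rightarrow> complex^'r^'n"
  assumes shifts: "\<And>i. 1 \<le> i \<Longrightarrow> i \<le> j \<Longrightarrow> Re (\<alpha> i) < 0"
    and nonsing: "\<And>i. 1 \<le> i \<Longrightarrow> i \<le> j \<Longrightarrow> invertible (cmat A + mat (\<alpha> i))"
    and w0: "w 0 = cmat B"
    and sdef: "\<And>i. 1 \<le> i \<Longrightarrow> i \<le> j \<Longrightarrow> s i = w (i - 1) - (cmat A + mat (\<alpha> i)) ** v i"
    and wdef: "\<And>i. 1 \<le> i \<Longrightarrow> i \<le> j \<Longrightarrow>
                 w i = w (i - 1) + (sqrt (- 2 * Re (\<alpha> i)))\<^sup>2 *\<^sub>R v i"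
  shows "w j = cayley_prod A \<alpha> 0 j ** cmat B
               - (\<Sum>i = 1..j. cayley_prod A \<alpha> i j ** (cayley A (\<alpha> i) - mat 1) ** s i)"
proof -
  have "w i = cayley A (\<alpha> i) ** w (i - 1) - (cayley A (\<alpha> i) - mat 1) ** s i"
    if "1 \<le> i" "i \<le> j" for i
  proof (rule inexact_adi_step[OF nonsing sdef])
    have "(sqrt (- 2 * Re (\<alpha> i)))\<^sup>2 = - 2 * Re (\<alpha> i)"
      using shifts[OF that] by simp
    then show "w i = w (i - 1) + (- 2 * Re (\<alpha> i)) *\<^sub>R v i"
      using wdef[OF that] by metis
  qed (use that in auto)
  then have "w j = cayley_prod A \<alpha> 0 j ** w 0
               - (\<Sum>i = 1..j. cayley_prod A \<alpha> i j ** ((cayley A (\<alpha> i) - mat 1) ** s i))"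
    by (rule cayley_recurrence_unfold)
  then show ?thesis
    by (simp add: w0 matrix_mul_assoc)
qed

end
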